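(* Let $W\ge2$, $B>0$, $\delta>0$ and $1\le k\le L$. Let $F_k,G_k\in\Phi_k(L,W,S,B)$ have weights and biases with $\|\mathcal W_F^{(l)}-\mathcal W_G^{(l)}\|_{\infty,\infty}\le\delta$ and $\|b_F^{(l)}-b_G^{(l)}\|_\infty\le\delta$ for all $1\le l\le k$. Then $$\sup_{x\in\Omega}\|J[F_k](x)-J[G_k](x)\|_\infty\le\delta\,W^{\frac{3^{k-1}-1}{2}}(B\vee d)^{\frac{5\cdot3^{k-1}-1}{2}}\,2^{\frac{3^k-1}{2}-k+1}\,3^{2k-2}.$$ In particular, for $k=L$, $$\sup_{x\in\Omega}\Big|\|\nabla F_L(x)\|-\|\nabla G_L(x)\|\Big|\le\delta\,W^{\frac{3^{L-1}-1}{2}}(B\vee d)^{\frac{5\cdot3^{L-1}-1}{2}}\,2^{\frac{3^L-1}{2}-L+1}\,3^{2L-2}.$$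
   Context: $\Omega=[0,1]^d$, $B\vee d=\max\{B,d\}$. $\eta_3(t)=\max\{t,0\}^3$ applied componentwise. Given weights $\mathcal W^{(1)}\in\mathbb R^{W\times d}$, $\mathcal W^{(l)}\in\mathbb R^{W\times W}$ ($1<l<L$), $\mathcal W^{(L)}\in\mathbb R^{1\times W}$ and biases $b^{(l)}$ of matching sizes, all entries of absolute value at most $B$ and with at most $S$ nonzero entries in total, define $F_1(x)=\mathcal W^{(1)}x+b^{(1)}$ and $F_k(x)=\mathcal W^{(k)}\eta_3(F_{k-1}(x))+b^{(k)}$ for $2\le k\le L$; $\Phi_k(L,W,S,B)$ is the set of all such $F_k$. $J[F_k](x)$ is the Jacobian of $F_k$ at $x$; for a matrix $A$, $\|A\|_\infty$ is the maximum absolute row sum and $\|A\|_{\infty,\infty}$ the maximum absolute entry; $\|\cdot\|_\infty$ on vectors is the maximum absolute entry and $\|\cdot\|$ the Euclidean norm. *)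

theory Defs
  imports "HOL-Analysis.Analysis"
begin

definition eta3 :: "real \<Rightarrow> real" where
  "eta3 t = (max t 0) ^ 3"

text \<open>Layer dimensions of a network of depth L, width W, input dimension d
  (layers indexed 1..L). Layer l maps R^(in_dim l) to R^(out_dim l).\<close>
definition in_dim :: "nat \<Rightarrow> nat \<Rightarrow> nat \<Rightarrow> nat" where
  "in_dim W d l = (if l = 1 then d else W)"

definition out_dim :: "nat \<Rightarrow> nat \<Rightarrow> nat \<Rightarrow> nat" where
  "out_dim L W l = (if l = L then 1 else W)"

text \<open>Parameters: Wt l i j is the (i,j) entry of the weight matrix of layer l,
  b l i the i-th entry of the bias of layer l (i, j starting at 0).\<close>
definition in_Phi ::
  "nat \<Rightarrow> nat \<Rightarrow> nat \<Rightarrow> nat \<Rightarrow> real \<Rightarrow> (nat \<Rightarrow> nat \<Rightarrow> nat \<Rightarrow> real) \<Rightarrow> (nat \<Rightarrow> nat \<Rightarrow> real) \<Rightarrow> bool" where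
  "in_Phi d L W S B Wt b \<longleftrightarrow>
     (\<forall>l\<in>{1..L}. \<forall>i<out_dim L W l. \<forall>j<in_dim W d l. \<bar>Wt l i j\<bar> \<le> B) \<and>
     (\<forall>l\<in>{1..L}. \<forall>i<out_dim L W l. \<bar>b l i\<bar> \<le> B) \<and>
     card {(l,i,j). l \<in> {1..L} \<and> i < out_dim L W l \<and> j < in_dim W d l \<and> Wt l i j \<noteq> 0}
       + card {(l,i). l \<in> {1..L} \<and> i < out_dim L W l \<and> b l i \<noteq> 0} \<le> S"

text \<open>Network evaluation: net d W Wt b k x i is the i-th component of F_k(x),
  where x : R^d is represented as a function nat => real (only x 0..x (d-1) used).\<close>
fun net :: "nat \<Rightarrow> nat \<Rightarrow> (nat \<Rightarrow> nat \<Rightarrow> nat \<Rightarrow> real) \<Rightarrow> (nat \<Rightarrow> nat \<Rightarrow> real) \<Rightarrow> nat \<Rightarrow> (nat \<Rightarrow> real) \<Rightarrow> nat \<Rightarrow> real" where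
  "net d W Wt b 0 x i = 0"
| "net d W Wt b (Suc 0) x i = (\<Sum>j<d. Wt 1 i j * x j) + b 1 i"
| "net d W Wt b (Suc (Suc k)) x i =
     (\<Sum>j<W. Wt (Suc (Suc k)) i j * eta3 (net d W Wt b (Suc k) x j)) + b (Suc (Suc k)) i"

definition jac :: "((nat \<Rightarrow> real) \<Rightarrow> nat \<Rightarrow> real) \<Rightarrow> (nat \<Rightarrow> real) \<Rightarrow> nat \<Rightarrow> nat \<Rightarrow> real" where
  "jac F x i j = deriv (\<lambda>t. F (x(j := x j + t)) i) 0"

definition mat_inf_norm :: "nat \<Rightarrow> nat \<Rightarrow> (nat \<Rightarrow> nat \<Rightarrow> real) \<Rightarrow> real" where
  "mat_inf_norm m n A = Max ((\<lambda>i. \<Sum>j<n. \<bar>A i j\<bar>) ` {..<m})"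

definition Omega :: "nat \<Rightarrow> (nat \<Rightarrow> real) set" where
  "Omega d = {x. \<forall>j<d. 0 \<le> x j \<and> x j \<le> 1}"

end

theory Submission
  imports Defs
begin

text \<open>The Jacobian obeys the chain rule J[F_(k+1)] = W^(k+1) diag(eta3'(F_k)) J[F_k]. By
  induction on the layer one bounds, for both networks, the values |F_k| and the row sums of
  J[F_k], and then the differences of these quantities between F and G: the weights contribute
  a factor B or delta, the width a factor W, and eta3, eta3' and their Lipschitz constants are
  of degree 3, 2, 2 and 1 in the previous bound, so every layer essentially cubes the bound.
  Solving the resulting recurrences yields the exponents (3^(k-1) - 1)/2 and
  (5 3^(k-1) - 1)/2. The gradient estimate follows from the reverse triangle inequality for
  the Euclidean norm together with ||v|| <= ||v||_1.\<close>

definition eta3_deriv :: "real \<Rightarrow> real" where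
  "eta3_deriv t = 3 * (max t 0)^2"

lemma has_real_derivative_eta3: "(eta3 has_real_derivative eta3_deriv t) (at t)"
proof -
  consider "t = 0" | "t > 0" | "t < 0" by linarith
  then show ?thesis
  proof cases
    case 1
    have "((\<lambda>h. (eta3 (0 + h) - eta3 0) / h) \<longlongrightarrow> 0) (at 0)"
    proof (rule Lim_null_comparison[where g="\<lambda>h. h\<^sup>2"])
      have "\<bar>eta3 h / h\<bar> \<le> h\<^sup>2" for h
        by (cases "h > 0") (simp_all add: eta3_def power2_eq_square power3_eq_cube)
      then show "\<forall>\<^sub>F h in at 0. norm ((eta3 (0 + h) - eta3 0) / h) \<le> h\<^sup>2"
        by (simp add: eta3_def)
      show "((\<lambda>h::real. h\<^sup>2) \<longlongrightarrow> 0) (at 0)"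
        using tendsto_power[OF tendsto_ident_at[of "0::real" UNIV], of 2] by simp
    qed
    then show ?thesis using 1 by (simp add: DERIV_def eta3_deriv_def)
  next
    case 2
    have "\<forall>\<^sub>F y in nhds t. y ^ 3 = eta3 y"
    proof (rule eventually_mono)
      show "\<forall>\<^sub>F y in nhds t. y \<in> {0<..}" using eventually_nhds_in_open[of "{0<..}" t] 2 by simp
    qed (simp add: eta3_def)
    moreover have "((\<lambda>y. y ^ 3) has_real_derivative 3 * t\<^sup>2) (at t)"
      by (auto intro!: derivative_eq_intros)
    ultimately show ?thesis
      using DERIV_cong_ev[OF refl, of "\<lambda>y. y ^ 3" eta3] 2 by (simp add: eta3_deriv_def)
  next
    case 3
    have "\<forall>\<^sub>F y in nhds t. 0 = eta3 y"
    proof (rule eventually_mono)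
      show "\<forall>\<^sub>F y in nhds t. y \<in> {..<0}" using eventually_nhds_in_open[of "{..<0}" t] 3 by simp
    qed (simp add: eta3_def)
    moreover have "((\<lambda>y. 0) has_real_derivative 0) (at t)"
      by simp
    ultimately show ?thesis
      using DERIV_cong_ev[OF refl, of "\<lambda>y. 0" eta3 t 0 0] 3 by (simp add: eta3_deriv_def)
  qed
qed

fun net_jac :: "nat \<Rightarrow> nat \<Rightarrow> (nat \<Rightarrow> nat \<Rightarrow> nat \<Rightarrow> real) \<Rightarrow> (nat \<Rightarrow> nat \<Rightarrow> real) \<Rightarrow> nat \<Rightarrow>
    (nat \<Rightarrow> real) \<Rightarrow> nat \<Rightarrow> nat \<Rightarrow> real" where
  "net_jac d W Wt b 0 x i j = 0"
| "net_jac d W Wt b (Suc 0) x i j = (if j < d then Wt 1 i j else 0)"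
| "net_jac d W Wt b (Suc (Suc k)) x i j =
     (\<Sum>l<W. Wt (Suc (Suc k)) i l * eta3_deriv (net d W Wt b (Suc k) x l) * net_jac d W Wt b (Suc k) x l j)"

lemma has_real_derivative_net_coordinate:
  "((\<lambda>t. net d W Wt b k (x(j := t)) i) has_real_derivative net_jac d W Wt b k (x(j := s)) i j) (at s)"
proof (induction k arbitrary: i rule: induct_nat_012)
  case 0
  then show ?case by simp
next
  case 1
  have upd: "((\<lambda>t. (x(j := t)) m) has_real_derivative (if m = j then 1 else 0)) (at s)" for m
    by (cases "m = j") auto
  have "((\<lambda>t. (\<Sum>m<d. Wt 1 i m * (x(j := t)) m) + b 1 i) has_real_derivative
          (\<Sum>m<d. Wt 1 i m * (if m = j then 1 else 0)) + 0) (at s)"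
    by (intro DERIV_add DERIV_sum DERIV_cmult upd DERIV_const)
  then show ?case
    by (simp add: if_distrib[of "\<lambda>y. _ * y"] cong: if_cong)
next
  case (ge2 k)
  have "((\<lambda>t. (\<Sum>l<W. Wt (Suc (Suc k)) i l * eta3 (net d W Wt b (Suc k) (x(j := t)) l))
            + b (Suc (Suc k)) i) has_real_derivative
         (\<Sum>l<W. Wt (Suc (Suc k)) i l * (eta3_deriv (net d W Wt b (Suc k) (x(j := s)) l)
            * net_jac d W Wt b (Suc k) (x(j := s)) l j)) + 0) (at s)"
    by (intro DERIV_add DERIV_sum DERIV_cmult DERIV_const
        DERIV_chain2[OF has_real_derivative_eta3] ge2.IH(2))
  then show ?case by (simp only: net.simps net_jac.simps mult.assoc add_0_right)
qed

lemma jac_net: "jac (net d W Wt b k) x i j = net_jac d W Wt b k x i j"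
proof -
  have "((\<lambda>t. net d W Wt b k (x(j := x j + t)) i) has_real_derivative
          net_jac d W Wt b k (x(j := x j + 0)) i j * 1) (at 0)"
    by (rule DERIV_chain2[where g="\<lambda>t. x j + t", OF has_real_derivative_net_coordinate])
       (auto intro!: derivative_eq_intros)
  then show ?thesis unfolding jac_def by (simp add: DERIV_imp_deriv)
qed

lemma abs_eta3_le: "\<bar>u\<bar> \<le> a \<Longrightarrow> \<bar>eta3 u\<bar> \<le> a ^ 3"
  by (auto simp: eta3_def intro!: power_mono)

lemma abs_eta3_deriv_le: "\<bar>u\<bar> \<le> a \<Longrightarrow> \<bar>eta3_deriv u\<bar> \<le> 3 * a\<^sup>2"
  by (auto simp: eta3_deriv_def intro!: power_mono)

lemma eta3_lipschitz:
  assumes "\<bar>u\<bar> \<le> a" "\<bar>v\<bar> \<le> a"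
  shows "\<bar>eta3 u - eta3 v\<bar> \<le> 3 * a\<^sup>2 * \<bar>u - v\<bar>"
proof -
  define p q where "p = max u 0" and "q = max v 0"
  have p: "0 \<le> p" "p \<le> a" and q: "0 \<le> q" "q \<le> a" and pq: "\<bar>p - q\<bar> \<le> \<bar>u - v\<bar>"
    using assms unfolding p_def q_def by auto
  have "eta3 u - eta3 v = (p - q) * (p * p + p * q + q * q)"
    by (simp add: eta3_def p_def q_def power3_eq_cube algebra_simps)
  then have "\<bar>eta3 u - eta3 v\<bar> = \<bar>p - q\<bar> * (p * p + p * q + q * q)"
    using p q by (simp add: abs_mult)
  also have "\<dots> \<le> \<bar>u - v\<bar> * (a * a + a * a + a * a)"
    using p q pq by (intro mult_mono add_mono) (auto intro: mult_mono)
  finally show ?thesis by (simp add: power2_eq_square algebra_simps)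
qed

lemma eta3_deriv_lipschitz:
  assumes "\<bar>u\<bar> \<le> a" "\<bar>v\<bar> \<le> a"
  shows "\<bar>eta3_deriv u - eta3_deriv v\<bar> \<le> 6 * a * \<bar>u - v\<bar>"
proof -
  define p q where "p = max u 0" and "q = max v 0"
  have p: "0 \<le> p" "p \<le> a" and q: "0 \<le> q" "q \<le> a" and pq: "\<bar>p - q\<bar> \<le> \<bar>u - v\<bar>"
    using assms unfolding p_def q_def by auto
  have "eta3_deriv u - eta3_deriv v = 3 * ((p - q) * (p + q))"
    by (simp add: eta3_deriv_def p_def q_def power2_eq_square algebra_simps)
  then have "\<bar>eta3_deriv u - eta3_deriv v\<bar> = 3 * (\<bar>p - q\<bar> * (p + q))"
    using p q by (simp only: abs_mult)
  also have "\<dots> \<le> 3 * (\<bar>u - v\<bar> * (a + a))"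
    using p q pq by (intro mult_left_mono mult_mono) auto
  finally show ?thesis by (simp add: algebra_simps)
qed

lemma sum_lessThan_le_mult: "(\<And>l. l < n \<Longrightarrow> f l \<le> c) \<Longrightarrow> (\<Sum>l<n. f l) \<le> real n * c"
  using sum_bounded_above[of "{..<n}" f c] by simp

lemma abs_sum_lessThan_le_mult: "(\<And>l. l < n \<Longrightarrow> \<bar>f l\<bar> \<le> c) \<Longrightarrow> \<bar>\<Sum>l<n. f l\<bar> \<le> real n * c"
  by (rule order_trans[OF sum_abs sum_lessThan_le_mult]) auto

lemma mult_mono3:
  "0 \<le> (x::real) \<Longrightarrow> x \<le> x' \<Longrightarrow> 0 \<le> y \<Longrightarrow> y \<le> y' \<Longrightarrow> 0 \<le> z \<Longrightarrow> z \<le> z' \<Longrightarrow> x * y * z \<le> x' * y' * z'"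
  by (meson mult_mono order_trans mult_nonneg_nonneg)

lemma abs_triple_product_diff_le:
  "\<bar>(p1::real) * q1 * r1 - p2 * q2 * r2\<bar>
     \<le> \<bar>p1 - p2\<bar> * \<bar>q1\<bar> * \<bar>r1\<bar> + \<bar>p2\<bar> * \<bar>q1 - q2\<bar> * \<bar>r1\<bar> + \<bar>p2\<bar> * \<bar>q2\<bar> * \<bar>r1 - r2\<bar>"
proof -
  have "p1 * q1 * r1 - p2 * q2 * r2 = (p1 - p2) * q1 * r1 + p2 * (q1 - q2) * r1 + p2 * q2 * (r1 - r2)"
    by (simp add: algebra_simps)
  then have "\<bar>p1 * q1 * r1 - p2 * q2 * r2\<bar> = \<bar>(p1 - p2) * q1 * r1 + p2 * (q1 - q2) * r1 + p2 * q2 * (r1 - r2)\<bar>"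
    by simp
  also have "\<dots> \<le> \<bar>(p1 - p2) * q1 * r1\<bar> + \<bar>p2 * (q1 - q2) * r1\<bar> + \<bar>p2 * q2 * (r1 - r2)\<bar>"
    by (rule order_trans[OF abs_triangle_ineq add_right_mono[OF abs_triangle_ineq]])
  finally show ?thesis by (simp add: abs_mult)
qed

lemma abs_layer_le:
  assumes "\<And>l. l < W \<Longrightarrow> \<bar>w l\<bar> \<le> B" "\<bar>c\<bar> \<le> B" "\<And>l. l < W \<Longrightarrow> \<bar>u l\<bar> \<le> a"
  shows "\<bar>(\<Sum>l<W. w l * eta3 (u l)) + c\<bar> \<le> real W * (B * a ^ 3) + B"
proof -
  have "\<bar>\<Sum>l<W. w l * eta3 (u l)\<bar> \<le> real W * (B * a ^ 3)"
  proof (rule abs_sum_lessThan_le_mult)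
    fix l assume l: "l < W"
    have "\<bar>w l * eta3 (u l)\<bar> = \<bar>w l\<bar> * \<bar>eta3 (u l)\<bar>" by (simp add: abs_mult)
    also have "\<dots> \<le> B * a ^ 3" using assms(1)[OF l] abs_eta3_le[OF assms(3)[OF l]]
      by (intro mult_mono) auto
    finally show "\<bar>w l * eta3 (u l)\<bar> \<le> B * a ^ 3" .
  qed
  then show ?thesis using assms(2) by linarith
qed

lemma abs_layer_diff_le:
  assumes "\<And>l. l < W \<Longrightarrow> \<bar>wG l\<bar> \<le> B" "\<And>l. l < W \<Longrightarrow> \<bar>wF l - wG l\<bar> \<le> \<delta>"
    "\<bar>cF - cG\<bar> \<le> \<delta>" "\<And>l. l < W \<Longrightarrow> \<bar>uF l\<bar> \<le> a" "\<And>l. l < W \<Longrightarrow> \<bar>uG l\<bar> \<le> a"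
    "\<And>l. l < W \<Longrightarrow> \<bar>uF l - uG l\<bar> \<le> e"
  shows "\<bar>((\<Sum>l<W. wF l * eta3 (uF l)) + cF) - ((\<Sum>l<W. wG l * eta3 (uG l)) + cG)\<bar>
          \<le> real W * (\<delta> * a ^ 3 + B * (3 * a\<^sup>2 * e)) + \<delta>"
proof -
  have "\<bar>wF l * eta3 (uF l) - wG l * eta3 (uG l)\<bar> \<le> \<delta> * a ^ 3 + B * (3 * a\<^sup>2 * e)"
    if l: "l < W" for l
  proof -
    have "\<bar>eta3 (uF l) - eta3 (uG l)\<bar> \<le> 3 * a\<^sup>2 * \<bar>uF l - uG l\<bar>"
      using eta3_lipschitz[OF assms(4,5)[OF l]] .
    also have "\<dots> \<le> 3 * a\<^sup>2 * e"
      using assms(6)[OF l] by (intro mult_left_mono) auto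
    finally have lip: "\<bar>eta3 (uF l) - eta3 (uG l)\<bar> \<le> 3 * a\<^sup>2 * e" .
    have "wF l * eta3 (uF l) - wG l * eta3 (uG l)
        = (wF l - wG l) * eta3 (uF l) + wG l * (eta3 (uF l) - eta3 (uG l))"
      by (simp add: algebra_simps)
    then have "\<bar>wF l * eta3 (uF l) - wG l * eta3 (uG l)\<bar>
        \<le> \<bar>wF l - wG l\<bar> * \<bar>eta3 (uF l)\<bar> + \<bar>wG l\<bar> * \<bar>eta3 (uF l) - eta3 (uG l)\<bar>"
      by (metis abs_mult abs_triangle_ineq)
    also have "\<dots> \<le> \<delta> * a ^ 3 + B * (3 * a\<^sup>2 * e)"
      using assms(1,2)[OF l] abs_eta3_le[OF assms(4)[OF l]] lip
      by (intro add_mono mult_mono) auto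
    finally show ?thesis .
  qed
  then have "\<bar>\<Sum>l<W. wF l * eta3 (uF l) - wG l * eta3 (uG l)\<bar> \<le> real W * (\<delta> * a ^ 3 + B * (3 * a\<^sup>2 * e))"
    by (rule abs_sum_lessThan_le_mult)
  then show ?thesis
    using assms(3) abs_triangle_ineq[of "\<Sum>l<W. wF l * eta3 (uF l) - wG l * eta3 (uG l)" "cF - cG"]
    by (simp add: sum_subtractf algebra_simps)
qed

lemma layer_jac_row_sum_le:
  assumes "\<And>l. l < W \<Longrightarrow> \<bar>w l\<bar> \<le> B" "\<And>l. l < W \<Longrightarrow> \<bar>u l\<bar> \<le> a"
    "\<And>l. l < W \<Longrightarrow> (\<Sum>j<d. \<bar>J l j\<bar>) \<le> \<beta>"
  shows "(\<Sum>j<d. \<bar>\<Sum>l<W. w l * eta3_deriv (u l) * J l j\<bar>) \<le> real W * (B * (3 * a\<^sup>2) * \<beta>)"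
proof -
  have "(\<Sum>j<d. \<bar>\<Sum>l<W. w l * eta3_deriv (u l) * J l j\<bar>) \<le> (\<Sum>j<d. \<Sum>l<W. \<bar>w l * eta3_deriv (u l) * J l j\<bar>)"
    by (intro sum_mono sum_abs)
  also have "\<dots> = (\<Sum>l<W. \<bar>w l\<bar> * \<bar>eta3_deriv (u l)\<bar> * (\<Sum>j<d. \<bar>J l j\<bar>))"
    by (subst sum.swap) (simp add: abs_mult sum_distrib_left)
  also have "\<dots> \<le> real W * (B * (3 * a\<^sup>2) * \<beta>)"
  proof (rule sum_lessThan_le_mult)
    fix l assume l: "l < W"
    show "\<bar>w l\<bar> * \<bar>eta3_deriv (u l)\<bar> * (\<Sum>j<d. \<bar>J l j\<bar>) \<le> B * (3 * a\<^sup>2) * \<beta>"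
      using assms(1,3)[OF l] abs_eta3_deriv_le[OF assms(2)[OF l]]
      by (intro mult_mono3) (simp_all add: sum_nonneg)
  qed
  finally show ?thesis .
qed

lemma row_sum_triple_product_diff_le:
  "(\<Sum>j<d. \<bar>(p1::real) * q1 * r1 j - p2 * q2 * r2 j\<bar>)
     \<le> \<bar>p1 - p2\<bar> * \<bar>q1\<bar> * (\<Sum>j<d. \<bar>r1 j\<bar>) + \<bar>p2\<bar> * \<bar>q1 - q2\<bar> * (\<Sum>j<d. \<bar>r1 j\<bar>)
       + \<bar>p2\<bar> * \<bar>q2\<bar> * (\<Sum>j<d. \<bar>r1 j - r2 j\<bar>)"
  using sum_mono[of "{..<d}", OF abs_triple_product_diff_le[of p1 q1 "r1 j" p2 q2 "r2 j" for j]]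
  by (simp add: sum.distrib sum_distrib_left)

lemma layer_jac_row_sum_diff_le:
  assumes "\<And>l. l < W \<Longrightarrow> \<bar>wG l\<bar> \<le> B" "\<And>l. l < W \<Longrightarrow> \<bar>wF l - wG l\<bar> \<le> \<delta>"
    "\<And>l. l < W \<Longrightarrow> \<bar>uF l\<bar> \<le> a" "\<And>l. l < W \<Longrightarrow> \<bar>uG l\<bar> \<le> a"
    "\<And>l. l < W \<Longrightarrow> \<bar>uF l - uG l\<bar> \<le> e"
    "\<And>l. l < W \<Longrightarrow> (\<Sum>j<d. \<bar>JF l j\<bar>) \<le> \<beta>"
    "\<And>l. l < W \<Longrightarrow> (\<Sum>j<d. \<bar>JF l j - JG l j\<bar>) \<le> g"
  shows "(\<Sum>j<d. \<bar>(\<Sum>l<W. wF l * eta3_deriv (uF l) * JF l j)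
                  - (\<Sum>l<W. wG l * eta3_deriv (uG l) * JG l j)\<bar>)
     \<le> real W * (\<delta> * (3 * a\<^sup>2) * \<beta> + B * (6 * a * e) * \<beta> + B * (3 * a\<^sup>2) * g)"
proof -
  let ?sF = "\<lambda>l. eta3_deriv (uF l)" and ?sG = "\<lambda>l. eta3_deriv (uG l)"
  have "(\<Sum>j<d. \<bar>(\<Sum>l<W. wF l * ?sF l * JF l j) - (\<Sum>l<W. wG l * ?sG l * JG l j)\<bar>)
      \<le> (\<Sum>j<d. \<Sum>l<W. \<bar>wF l * ?sF l * JF l j - wG l * ?sG l * JG l j\<bar>)"
    unfolding sum_subtractf[symmetric] by (intro sum_mono sum_abs)
  also have "\<dots> = (\<Sum>l<W. \<Sum>j<d. \<bar>wF l * ?sF l * JF l j - wG l * ?sG l * JG l j\<bar>)"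
    by (rule sum.swap)
  also have "\<dots> \<le> real W * (\<delta> * (3 * a\<^sup>2) * \<beta> + B * (6 * a * e) * \<beta> + B * (3 * a\<^sup>2) * g)"
  proof (rule sum_lessThan_le_mult)
    fix l assume l: "l < W"
    have "0 \<le> \<delta>" "0 \<le> B"
      using assms(1,2)[OF l] by linarith+
    have "\<bar>?sF l - ?sG l\<bar> \<le> 6 * a * \<bar>uF l - uG l\<bar>"
      using eta3_deriv_lipschitz[OF assms(3,4)[OF l]] .
    also have "\<dots> \<le> 6 * a * e"
      using assms(3,5)[OF l] by (intro mult_left_mono) (auto intro: order_trans[OF abs_ge_zero])
    finally have "\<bar>?sF l - ?sG l\<bar> \<le> 6 * a * e" .
    then have "\<bar>wF l - wG l\<bar> * \<bar>?sF l\<bar> * (\<Sum>j<d. \<bar>JF l j\<bar>) + \<bar>wG l\<bar> * \<bar>?sF l - ?sG l\<bar> * (\<Sum>j<d. \<bar>JF l j\<bar>)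
        + \<bar>wG l\<bar> * \<bar>?sG l\<bar> * (\<Sum>j<d. \<bar>JF l j - JG l j\<bar>)
      \<le> \<delta> * (3 * a\<^sup>2) * \<beta> + B * (6 * a * e) * \<beta> + B * (3 * a\<^sup>2) * g"
      using assms(1,2,6,7)[OF l] abs_eta3_deriv_le[OF assms(3)[OF l]] abs_eta3_deriv_le[OF assms(4)[OF l]]
        \<open>0 \<le> \<delta>\<close> \<open>0 \<le> B\<close>
      by (intro add_mono mult_mono3) (simp_all add: sum_nonneg)
    with row_sum_triple_product_diff_le
    show "(\<Sum>j<d. \<bar>wF l * ?sF l * JF l j - wG l * ?sG l * JG l j\<bar>)
      \<le> \<delta> * (3 * a\<^sup>2) * \<beta> + B * (6 * a * e) * \<beta> + B * (3 * a\<^sup>2) * g"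
      by (rule order_trans)
  qed
  finally show ?thesis .
qed

fun value_coeff :: "nat \<Rightarrow> real" where
  "value_coeff 0 = 2"
| "value_coeff (Suc n) = 2 * value_coeff n ^ 3"

fun jac_coeff :: "nat \<Rightarrow> real" where
  "jac_coeff 0 = 1"
| "jac_coeff (Suc n) = 3 * value_coeff n ^ 2 * jac_coeff n"

fun growth :: "real \<Rightarrow> real \<Rightarrow> nat \<Rightarrow> real" where
  "growth W M 0 = M\<^sup>2"
| "growth W M (Suc n) = W * M * growth W M n ^ 3"

lemma value_coeff_ge_1: "1 \<le> value_coeff n"
proof (induction n)
  case (Suc n)
  have "1 \<le> value_coeff n ^ 3"
    using Suc by simp
  then show ?case by simp
qed simp

lemma jac_coeff_ge_1: "1 \<le> jac_coeff n"
  by (induction n) (simp_all add: mult_ge1_I value_coeff_ge_1)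

lemma growth_ge_1: "1 \<le> W \<Longrightarrow> 1 \<le> M \<Longrightarrow> 1 \<le> growth W M n"
  by (induction n) (simp_all add: mult_ge1_I)

lemma value_bound_step:
  fixes W M B A X :: real
  assumes "1 \<le> W" "1 \<le> M" "0 \<le> B" "B \<le> M" "1 \<le> A" "1 \<le> X"
  shows "W * (B * (A * X)^3) + B \<le> 2 * A^3 * (W * M * X^3)"
proof -
  define K where "K = W * A^3 * X^3"
  have K: "1 \<le> K"
    unfolding K_def using assms by (intro mult_ge1_I one_le_power)
  have "W * (B * (A * X)^3) + B = K * B + B"
    unfolding K_def by (simp add: power_mult_distrib algebra_simps)
  also have "\<dots> \<le> K * M + K * M"
    using K assms(2-4) mult_left_mono[OF assms(4), of K] mult_right_mono[OF K, of M] by linarith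
  also have "\<dots> = 2 * A^3 * (W * M * X^3)"
    unfolding K_def by (simp add: algebra_simps)
  finally show ?thesis .
qed

lemma jac_bound_step:
  fixes W M B A X C :: real
  assumes "1 \<le> W" "0 \<le> B" "B \<le> M" "1 \<le> A" "1 \<le> X" "1 \<le> C"
  shows "W * (B * (3 * (A * X)^2) * (C * X)) \<le> 3 * A^2 * C * (W * M * X^3)"
proof -
  define K where "K = 3 * W * A^2 * C * X^3"
  have "0 \<le> K"
    unfolding K_def using assms by simp
  then have "K * B \<le> K * M"
    using assms(3) by (rule mult_left_mono[rotated])
  then show ?thesis
    unfolding K_def by (simp add: power_mult_distrib power2_eq_square power3_eq_cube algebra_simps)
qed

lemma value_diff_bound_step:
  fixes W M B A X y \<delta> :: real
  assumes "1 \<le> W" "1 \<le> M" "0 \<le> B" "B \<le> M" "1 \<le> A" "1 \<le> X" "1 \<le> y" "0 \<le> \<delta>"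
  shows "W * (\<delta> * (A * X)^3 + B * (3 * (A * X)^2 * (\<delta> * (A * y) * X))) + \<delta>
           \<le> \<delta> * ((2 * A^3) * (3 * y)) * (W * M * X^3)"
proof -
  define K where "K = W * A^3 * X^3"
  have K: "1 \<le> K"
    unfolding K_def using assms by (intro mult_ge1_I one_le_power)
  have Ky: "1 \<le> K * y" "K \<le> K * y"
    using K assms(7) mult_ge1_I[OF K assms(7)] mult_left_mono[OF assms(7), of K] by auto
  have "B * (K * y) \<le> M * (K * y)" "K * y \<le> M * (K * y)"
    using Ky assms(2,4) mult_right_mono[of 1 M "K * y"] by (auto intro: mult_right_mono)
  then have "K + 3 * (B * (K * y)) + 1 \<le> 6 * (M * (K * y))"
    using Ky by linarith
  then have "\<delta> * (K + 3 * (B * (K * y)) + 1) \<le> \<delta> * (6 * (M * (K * y)))"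
    using assms(8) by (rule mult_left_mono)
  then show ?thesis
    unfolding K_def by (simp add: power_mult_distrib power2_eq_square power3_eq_cube algebra_simps)
qed

lemma jac_diff_bound_step:
  fixes W M B A X y \<delta> C :: real
  assumes "1 \<le> W" "1 \<le> M" "0 \<le> B" "B \<le> M" "1 \<le> A" "1 \<le> X" "1 \<le> y" "0 \<le> \<delta>" "1 \<le> C"
  shows "W * (\<delta> * (3 * (A * X)^2) * (C * X) + B * (6 * (A * X) * (\<delta> * (A * y) * X)) * (C * X)
              + B * (3 * (A * X)^2) * (\<delta> * (2 * C * y) * X))
           \<le> \<delta> * (2 * (3 * A^2 * C) * (3 * y)) * (W * M * X^3)"
proof -
  define K where "K = \<delta> * W * A^2 * C * X^3"
  have "0 \<le> K"
    unfolding K_def using assms by simp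
  have "1 \<le> M * y" "B * y \<le> M * y"
    using assms by (auto intro: mult_ge1_I mult_right_mono)
  then have "K * (3 + 12 * (B * y)) \<le> K * (18 * (M * y))"
    using \<open>0 \<le> K\<close> by (intro mult_left_mono) linarith+
  then show ?thesis
    unfolding K_def by (simp add: power_mult_distrib power2_eq_square power3_eq_cube algebra_simps)
qed

lemma three_pow_half_Suc: "(3 ^ Suc n - 1) div 2 = 3 * ((3 ^ n - 1) div 2) + (1::nat)"
proof -
  have "odd ((3::nat) ^ n)" by simp
  then obtain t where "(3::nat) ^ n = 2 * t + 1" by (rule oddE)
  then show ?thesis by simp
qed

lemma five_three_pow_half_Suc: "(5 * 3 ^ Suc n - 1) div 2 = 3 * ((5 * 3 ^ n - 1) div 2) + (1::nat)"
proof -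
  have "odd ((3::nat) ^ n)" by simp
  then obtain t where "(3::nat) ^ n = 2 * t + 1" by (rule oddE)
  then show ?thesis by simp
qed

lemma Suc_le_three_pow_half: "Suc n \<le> (3 ^ Suc n - 1) div 2 + (1::nat)"
proof (induction n)
  case (Suc n)
  then show ?case unfolding three_pow_half_Suc[of "Suc n"] by simp
qed simp

lemma growth_closed_form: "growth W M n = W ^ ((3 ^ n - 1) div 2) * M ^ ((5 * 3 ^ n - 1) div 2)"
proof (induction n)
  case (Suc n)
  show ?case
    unfolding growth.simps Suc three_pow_half_Suc five_three_pow_half_Suc
    by (simp add: power_add power_mult_distrib power_mult[symmetric] mult_ac)
qed simp

lemma value_coeff_closed_form: "value_coeff n = 2 ^ ((3 ^ Suc n - 1) div 2)"
proof (induction n)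
  case (Suc n)
  show ?case
    unfolding value_coeff.simps Suc three_pow_half_Suc[of "Suc n"]
    by (simp add: power_add power_mult[symmetric] mult_ac)
qed simp

lemma jac_coeff_closed_form: "jac_coeff n * 2 ^ Suc n = 3 ^ n * 2 ^ ((3 ^ Suc n - 1) div 2)"
proof (induction n)
  case (Suc n)
  define e :: nat where "e = (3 ^ Suc n - 1) div 2"
  have "jac_coeff (Suc n) * 2 ^ Suc (Suc n) = 3 * 2 * value_coeff n ^ 2 * (jac_coeff n * 2 ^ Suc n)"
    by (simp add: algebra_simps)
  also have "\<dots> = 3 * 2 * (2 ^ e)\<^sup>2 * (3 ^ n * 2 ^ e)"
    unfolding Suc value_coeff_closed_form e_def ..
  also have "\<dots> = 3 ^ Suc n * 2 ^ (3 * e + 1)"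
  proof -
    have "3 * e + 1 = Suc (e + e + e)" by simp
    then have "(2::real) ^ (3 * e + 1) = 2 * (2 ^ e)\<^sup>2 * 2 ^ e"
      by (simp only: power_Suc power_add power2_eq_square mult.assoc)
    then show ?thesis by (simp add: mult_ac)
  qed
  also have "\<dots> = 3 ^ Suc n * 2 ^ ((3 ^ Suc (Suc n) - 1) div 2)"
    unfolding e_def three_pow_half_Suc[of "Suc n"] ..
  finally show ?case .
qed simp

lemma jac_diff_coeff_closed_form:
  "2 * jac_coeff n * 3 ^ n = (2::real) ^ ((3 ^ Suc n - 1) div 2 + 1 - Suc n) * 3 ^ (2 * Suc n - 2)"
proof -
  define r where "r = (3 ^ Suc n - 1) div 2 + 1 - Suc n"
  have r: "(3 ^ Suc n - 1) div 2 = n + r"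
    using Suc_le_three_pow_half[of n] unfolding r_def by simp
  have "2 * jac_coeff n * 3 ^ n * 2 ^ n = (jac_coeff n * 2 ^ Suc n) * 3 ^ n"
    by (simp only: power_Suc mult_ac)
  also have "\<dots> = 2 ^ r * 3 ^ (2 * Suc n - 2) * (2::real) ^ n"
  proof -
    have "2 * Suc n - 2 = n + n" by simp
    then show ?thesis
      unfolding jac_coeff_closed_form r by (simp only: power_add mult_ac)
  qed
  finally show ?thesis
    unfolding r_def[symmetric] by simp
qed

definition params_bounded ::
  "nat \<Rightarrow> nat \<Rightarrow> nat \<Rightarrow> nat \<Rightarrow> real \<Rightarrow> (nat \<Rightarrow> nat \<Rightarrow> nat \<Rightarrow> real) \<Rightarrow> (nat \<Rightarrow> nat \<Rightarrow> real) \<Rightarrow> bool" where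
  "params_bounded d L W k B Wt b \<longleftrightarrow>
     (\<forall>l\<in>{1..k}. \<forall>i<out_dim L W l. (\<forall>j<in_dim W d l. \<bar>Wt l i j\<bar> \<le> B) \<and> \<bar>b l i\<bar> \<le> B)"

lemma in_Phi_params_bounded: "in_Phi d L W S B Wt b \<Longrightarrow> k \<le> L \<Longrightarrow> params_bounded d L W k B Wt b"
  by (auto simp: in_Phi_def params_bounded_def)

lemma first_layer_bounds:
  assumes x: "x \<in> Omega d" and w: "\<And>j. j < d \<Longrightarrow> \<bar>Wt 1 i j\<bar> \<le> c" and "\<bar>b 1 i\<bar> \<le> c"
  shows "\<bar>net d W Wt b (Suc 0) x i\<bar> \<le> real d * c + c"
    and "(\<Sum>j<d. \<bar>net_jac d W Wt b (Suc 0) x i j\<bar>) \<le> real d * c"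
proof -
  have "\<bar>\<Sum>j<d. Wt 1 i j * x j\<bar> \<le> real d * c"
  proof (rule abs_sum_lessThan_le_mult)
    fix j assume "j < d"
    then have "\<bar>x j\<bar> \<le> 1" "\<bar>Wt 1 i j\<bar> \<le> c"
      using x w by (auto simp: Omega_def)
    moreover have "\<bar>Wt 1 i j\<bar> * \<bar>x j\<bar> \<le> \<bar>Wt 1 i j\<bar>"
      using \<open>\<bar>x j\<bar> \<le> 1\<close> by (simp add: mult_left_le)
    ultimately show "\<bar>Wt 1 i j * x j\<bar> \<le> c"
      by (simp add: abs_mult)
  qed
  then show "\<bar>net d W Wt b (Suc 0) x i\<bar> \<le> real d * c + c"
    using assms(3) by simp
  show "(\<Sum>j<d. \<bar>net_jac d W Wt b (Suc 0) x i j\<bar>) \<le> real d * c"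
    using sum_lessThan_le_mult[of d "\<lambda>j. \<bar>Wt 1 i j\<bar>", OF w] by simp
qed

lemma net_bounds:
  fixes Wt :: "nat \<Rightarrow> nat \<Rightarrow> nat \<Rightarrow> real" and b :: "nat \<Rightarrow> nat \<Rightarrow> real"
  assumes W: "1 \<le> W" and M: "1 \<le> M" "0 \<le> B" "B \<le> M" "real d \<le> M"
    and P: "params_bounded d L W k B Wt b" and kL: "k \<le> L" and x: "x \<in> Omega d"
  shows "Suc n \<le> k \<Longrightarrow> i < out_dim L W (Suc n) \<Longrightarrow>
    \<bar>net d W Wt b (Suc n) x i\<bar> \<le> value_coeff n * growth W M n \<and>
    (\<Sum>j<d. \<bar>net_jac d W Wt b (Suc n) x i j\<bar>) \<le> jac_coeff n * growth W M n"
proof (induction n arbitrary: i)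
  case 0
  have w: "\<And>j. j < d \<Longrightarrow> \<bar>Wt 1 i j\<bar> \<le> B" and c: "\<bar>b 1 i\<bar> \<le> B"
    using P 0 by (auto simp: params_bounded_def in_dim_def)
  have "M \<le> M\<^sup>2" "real d * B \<le> M\<^sup>2"
    using M mult_right_mono[of 1 M M] mult_mono[of "real d" M B M] by (auto simp: power2_eq_square)
  then have "real d * B \<le> M\<^sup>2" "B \<le> M\<^sup>2"
    using M by linarith+
  then show ?case
    using first_layer_bounds[where Wt = Wt and b = b and c = B, OF x w c] by simp
next
  case (Suc n)
  let ?a = "value_coeff n" and ?c = "jac_coeff n" and ?X = "growth W M n"
  have "out_dim L W (Suc n) = W"
    using Suc.prems(1) kL by (simp add: out_dim_def)
  then have IH: "\<bar>net d W Wt b (Suc n) x l\<bar> \<le> ?a * ?X"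
      "(\<Sum>j<d. \<bar>net_jac d W Wt b (Suc n) x l j\<bar>) \<le> ?c * ?X" if "l < W" for l
    using Suc.IH[of l] Suc.prems(1) that by auto
  have w: "\<And>l. l < W \<Longrightarrow> \<bar>Wt (Suc (Suc n)) i l\<bar> \<le> B" and c: "\<bar>b (Suc (Suc n)) i\<bar> \<le> B"
    using P Suc.prems by (auto simp: params_bounded_def in_dim_def)
  have ge1: "1 \<le> real W" "1 \<le> ?a" "1 \<le> ?c" "1 \<le> ?X"
    using W M value_coeff_ge_1 jac_coeff_ge_1 growth_ge_1 by auto
  have "\<bar>net d W Wt b (Suc (Suc n)) x i\<bar> \<le> value_coeff (Suc n) * growth W M (Suc n)"
    using order_trans[OF abs_layer_le[OF w c IH(1)] value_bound_step[OF ge1(1) M(1-3) ge1(2,4)]]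
    by simp
  moreover have "(\<Sum>j<d. \<bar>net_jac d W Wt b (Suc (Suc n)) x i j\<bar>) \<le> jac_coeff (Suc n) * growth W M (Suc n)"
    using order_trans[OF layer_jac_row_sum_le[OF w IH] jac_bound_step[OF ge1(1) M(2,3) ge1(2,4,3)]]
    by simp
  ultimately show ?case by simp
qed

lemma net_diff_bounds:
  fixes WF WG :: "nat \<Rightarrow> nat \<Rightarrow> nat \<Rightarrow> real" and bF bG :: "nat \<Rightarrow> nat \<Rightarrow> real"
  assumes W: "1 \<le> W" and M: "1 \<le> M" "0 \<le> B" "B \<le> M" "real d \<le> M" and \<delta>: "0 \<le> \<delta>"
    and F: "params_bounded d L W k B WF bF" and G: "params_bounded d L W k B WG bG"
    and D: "params_bounded d L W k \<delta> (\<lambda>l i j. WF l i j - WG l i j) (\<lambda>l i. bF l i - bG l i)"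
    and kL: "k \<le> L" and x: "x \<in> Omega d"
  shows "Suc n \<le> k \<Longrightarrow> i < out_dim L W (Suc n) \<Longrightarrow>
    \<bar>net d W WF bF (Suc n) x i - net d W WG bG (Suc n) x i\<bar>
      \<le> \<delta> * (value_coeff n * 3 ^ n) * growth W M n \<and>
    (\<Sum>j<d. \<bar>net_jac d W WF bF (Suc n) x i j - net_jac d W WG bG (Suc n) x i j\<bar>)
      \<le> \<delta> * (2 * jac_coeff n * 3 ^ n) * growth W M n"
proof (induction n arbitrary: i)
  case 0
  let ?WD = "\<lambda>l i j. WF l i j - WG l i j" and ?bD = "\<lambda>l i. bF l i - bG l i"
  have "\<bar>net d W ?WD ?bD (Suc 0) x i\<bar> \<le> real d * \<delta> + \<delta>"
    "(\<Sum>j<d. \<bar>net_jac d W ?WD ?bD (Suc 0) x i j\<bar>) \<le> real d * \<delta>"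
    using D 0 by (intro first_layer_bounds[OF x]; auto simp: params_bounded_def in_dim_def)+
  then have "\<bar>net d W WF bF (Suc 0) x i - net d W WG bG (Suc 0) x i\<bar> \<le> \<delta> * (real d + 1)"
    "(\<Sum>j<d. \<bar>net_jac d W WF bF (Suc 0) x i j - net_jac d W WG bG (Suc 0) x i j\<bar>)
       \<le> \<delta> * (real d + 1)"
    using \<delta> by (simp_all add: sum_subtractf left_diff_distrib algebra_simps)
  moreover have "M \<le> M\<^sup>2"
    using M mult_right_mono[of 1 M M] by (simp add: power2_eq_square)
  then have "\<delta> * (real d + 1) \<le> \<delta> * (2 * M\<^sup>2)"
    using M \<delta> by (intro mult_left_mono) linarith+
  ultimately show ?case by simp
next
  case (Suc n)
  let ?a = "value_coeff n" and ?c = "jac_coeff n" and ?X = "growth W M n" and ?y = "3 ^ n :: real"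
  have "out_dim L W (Suc n) = W"
    using Suc.prems(1) kL by (simp add: out_dim_def)
  then have IH: "\<bar>net d W WF bF (Suc n) x l - net d W WG bG (Suc n) x l\<bar> \<le> \<delta> * (?a * ?y) * ?X"
      "(\<Sum>j<d. \<bar>net_jac d W WF bF (Suc n) x l j - net_jac d W WG bG (Suc n) x l j\<bar>)
         \<le> \<delta> * (2 * ?c * ?y) * ?X"
    and bounds: "\<bar>net d W WF bF (Suc n) x l\<bar> \<le> ?a * ?X" "\<bar>net d W WG bG (Suc n) x l\<bar> \<le> ?a * ?X"
      "(\<Sum>j<d. \<bar>net_jac d W WF bF (Suc n) x l j\<bar>) \<le> ?c * ?X"
    if "l < W" for l
    using Suc.IH[of l] net_bounds[OF W M F kL x, of n l] net_bounds[OF W M G kL x, of n l]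
      Suc.prems(1) that by auto
  have wG: "\<And>l. l < W \<Longrightarrow> \<bar>WG (Suc (Suc n)) i l\<bar> \<le> B"
    using G Suc.prems by (auto simp: params_bounded_def in_dim_def)
  have wD: "\<And>l. l < W \<Longrightarrow> \<bar>WF (Suc (Suc n)) i l - WG (Suc (Suc n)) i l\<bar> \<le> \<delta>"
    and cD: "\<bar>bF (Suc (Suc n)) i - bG (Suc (Suc n)) i\<bar> \<le> \<delta>"
    using D Suc.prems by (auto simp: params_bounded_def in_dim_def)
  have ge1: "1 \<le> real W" "1 \<le> ?a" "1 \<le> ?c" "1 \<le> ?X" "1 \<le> ?y"
    using W M value_coeff_ge_1 jac_coeff_ge_1 growth_ge_1 by auto
  have "\<bar>net d W WF bF (Suc (Suc n)) x i - net d W WG bG (Suc (Suc n)) x i\<bar>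
      \<le> \<delta> * (value_coeff (Suc n) * 3 ^ Suc n) * growth W M (Suc n)"
    using order_trans[OF abs_layer_diff_le[OF wG wD cD bounds(1,2) IH(1)]
        value_diff_bound_step[OF ge1(1) M(1-3) ge1(2,4,5) \<delta>]]
    by (simp add: mult_ac)
  moreover have "(\<Sum>j<d. \<bar>net_jac d W WF bF (Suc (Suc n)) x i j - net_jac d W WG bG (Suc (Suc n)) x i j\<bar>)
      \<le> \<delta> * (2 * jac_coeff (Suc n) * 3 ^ Suc n) * growth W M (Suc n)"
    using order_trans[OF layer_jac_row_sum_diff_le[OF wG wD bounds(1,2) IH(1) bounds(3) IH(2)]
        jac_diff_bound_step[OF ge1(1) M(1-3) ge1(2,4,5) \<delta> ge1(3)]]
    by (simp add: mult_ac)
  ultimately show ?case ..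
qed

lemma abs_sqrt_sum_squares_diff_le:
  "\<bar>sqrt (\<Sum>j<d. (a j)\<^sup>2) - sqrt (\<Sum>j<d. (b j)\<^sup>2)\<bar> \<le> (\<Sum>j<d. \<bar>a j - b j\<bar>)"
proof -
  have "L2_set a {..<d} \<le> L2_set (\<lambda>j. a j - b j) {..<d} + L2_set b {..<d}"
    using L2_set_triangle_ineq[of "\<lambda>j. a j - b j" b "{..<d}"] by simp
  moreover have "L2_set b {..<d} \<le> L2_set (\<lambda>j. b j - a j) {..<d} + L2_set a {..<d}"
    using L2_set_triangle_ineq[of "\<lambda>j. b j - a j" a "{..<d}"] by simp
  moreover have "L2_set (\<lambda>j. b j - a j) {..<d} = L2_set (\<lambda>j. a j - b j) {..<d}"
    unfolding L2_set_def by (simp add: power2_commute)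
  ultimately show ?thesis
    using L2_set_le_sum_abs[of "\<lambda>j. a j - b j" "{..<d}"] unfolding L2_set_def by linarith
qed

lemma mat_inf_norm_le:
  assumes "0 < m" "\<And>i. i < m \<Longrightarrow> (\<Sum>j<n. \<bar>A i j\<bar>) \<le> c"
  shows "mat_inf_norm m n A \<le> c"
  using assms unfolding mat_inf_norm_def by (subst Max_le_iff) auto

lemma jac_row_sum_diff_le:
  fixes WF WG :: "nat \<Rightarrow> nat \<Rightarrow> nat \<Rightarrow> real" and bF bG :: "nat \<Rightarrow> nat \<Rightarrow> real"
  assumes W: "1 \<le> W" and B: "0 < B" and \<delta>: "0 \<le> \<delta>" and k: "1 \<le> k" "k \<le> L"
    and F: "params_bounded d L W k B WF bF" and G: "params_bounded d L W k B WG bG"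
    and D: "params_bounded d L W k \<delta> (\<lambda>l i j. WF l i j - WG l i j) (\<lambda>l i. bF l i - bG l i)"
    and x: "x \<in> Omega d" and i: "i < out_dim L W k"
  shows "(\<Sum>j<d. \<bar>jac (net d W WF bF k) x i j - jac (net d W WG bG k) x i j\<bar>)
    \<le> \<delta> * real W ^ ((3 ^ (k - 1) - 1) div 2) * (max B (real d)) ^ ((5 * 3 ^ (k - 1) - 1) div 2)
        * 2 ^ ((3 ^ k - 1) div 2 + 1 - k) * 3 ^ (2 * k - 2)"
proof (cases "d = 0")
  case True
  \<comment> \<open>The estimates need max B d \<ge> 1, which may fail for d = 0; but then all row sums are empty.\<close>
  then show ?thesis using B \<delta> by simp
next
  case False
  obtain n where n: "k = Suc n" using k(1) by (cases k) auto
  define M where "M = max B (real d)"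
  have M: "1 \<le> M" "0 \<le> B" "B \<le> M" "real d \<le> M"
    using False B unfolding M_def by auto
  have "(\<Sum>j<d. \<bar>jac (net d W WF bF k) x i j - jac (net d W WG bG k) x i j\<bar>)
      \<le> \<delta> * (2 * jac_coeff n * 3 ^ n) * growth W M n"
    using net_diff_bounds[OF W M \<delta> F G D k(2) x, of n i] i n by (simp add: jac_net)
  also have "\<dots> = \<delta> * real W ^ ((3 ^ (k - 1) - 1) div 2) * M ^ ((5 * 3 ^ (k - 1) - 1) div 2)
        * 2 ^ ((3 ^ k - 1) div 2 + 1 - k) * 3 ^ (2 * k - 2)"
    unfolding jac_diff_coeff_closed_form growth_closed_form n diff_Suc_1 by (simp only: mult_ac)
  finally show ?thesis
    unfolding M_def .
qed

theorem mainTheorem17: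
  fixes d L W S k :: nat and B \<delta> :: real
    and WF WG :: "nat \<Rightarrow> nat \<Rightarrow> nat \<Rightarrow> real" and bF bG :: "nat \<Rightarrow> nat \<Rightarrow> real"
  assumes W2: "W \<ge> 2" and Bpos: "B > 0" and dpos: "\<delta> > 0"
    and k1: "1 \<le> k" and kL: "k \<le> L"
    and F: "in_Phi d L W S B WF bF" and G: "in_Phi d L W S B WG bG"
    and dW: "\<forall>l\<in>{1..k}. \<forall>i<out_dim L W l. \<forall>j<in_dim W d l. \<bar>WF l i j - WG l i j\<bar> \<le> \<delta>"
    and db: "\<forall>l\<in>{1..k}. \<forall>i<out_dim L W l. \<bar>bF l i - bG l i\<bar> \<le> \<delta>"
  shows "(\<forall>x\<in>Omega d.
            mat_inf_norm (out_dim L W k) d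
              (\<lambda>i j. jac (net d W WF bF k) x i j - jac (net d W WG bG k) x i j)
            \<le> \<delta> * real W ^ ((3 ^ (k - 1) - 1) div 2)
                * (max B (real d)) ^ ((5 * 3 ^ (k - 1) - 1) div 2)
                * 2 ^ ((3 ^ k - 1) div 2 + 1 - k) * 3 ^ (2 * k - 2))
       \<and> (k = L \<longrightarrow> (\<forall>x\<in>Omega d.
            \<bar>sqrt (\<Sum>j<d. (jac (net d W WF bF L) x 0 j)\<^sup>2)
               - sqrt (\<Sum>j<d. (jac (net d W WG bG L) x 0 j)\<^sup>2)\<bar>
            \<le> \<delta> * real W ^ ((3 ^ (L - 1) - 1) div 2)
                * (max B (real d)) ^ ((5 * 3 ^ (L - 1) - 1) div 2)
                * 2 ^ ((3 ^ L - 1) div 2 + 1 - L) * 3 ^ (2 * L - 2)))"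
proof -
  have D: "params_bounded d L W k \<delta> (\<lambda>l i j. WF l i j - WG l i j) (\<lambda>l i. bF l i - bG l i)"
    using dW db by (simp add: params_bounded_def)
  note rows = jac_row_sum_diff_le[OF _ Bpos _ k1 kL in_Phi_params_bounded[OF F kL]
      in_Phi_params_bounded[OF G kL] D]
  have out: "0 < out_dim L W k"
    using W2 by (simp add: out_dim_def)
  show ?thesis
  proof (cases "k = L")
    case True
    show ?thesis
      using out W2 dpos unfolding True
      by (auto intro!: mat_inf_norm_le order_trans[OF abs_sqrt_sum_squares_diff_le]
          rows[unfolded True, simplified])
  next
    case False
    then show ?thesis
      using out W2 dpos by (auto intro!: mat_inf_norm_le rows[simplified])
  qed
qed

end
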